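(* Let $n\ge3$, $\beta>0$, $\gamma\in(1,2]$ with $\beta\gamma<n$, $p,q>0$, $\sigma_1,\sigma_2\in(-\beta\gamma,\infty)$, and suppose $$pq>(\gamma-1)^2\quad\text{and}\quad \max\{q_0,p_0\}<\frac{n-\beta\gamma}{\gamma-1}.$$ Then there exist double bounded functions $c_1,c_2$ such that the system $u(x)=c_1(x)W_{\beta,\gamma}(|y|^{\sigma_1}v^q)(x)$, $v(x)=c_2(x)W_{\beta,\gamma}(|y|^{\sigma_2}u^p)(x)$ ($x\in\mathbb{R}^n$) admits a positive solution.
   Context: For $f\ge 0$, $f\in L^1_{loc}(\mathbb{R}^n)$, the Wolff potential is $W_{\beta,\gamma}(f)(x)=\int_0^\infty\Big(\frac{\int_{B_t(x)}f(y)\,dy}{t^{n-\beta\gamma}}\Big)^{\frac{1}{\gamma-1}}\frac{dt}{t}$, where $B_t(x)$ is the open ball of radius $t$ centered at $x$. A function $c:\mathbb{R}^n\to\mathbb{R}$ is double bounded if there is $C>0$ with $1/C\le c(x)\le C$ for all $x$. A solution of the system is a pair of nonnegative functions $u,v\in L^1_{loc}(\mathbb{R}^n)$ satisfying both equations for a.e. $x$; it is positive if $u,v>0$. For $pq>(\gamma-1)^2$, $q_0=\frac{\beta\gamma(\gamma-1+q)+(\gamma-1)\sigma_1+\sigma_2 q}{pq-(\gamma-1)^2}$, $p_0=\frac{\beta\gamma(\gamma-1+p)+(\gamma-1)\sigma_2+\sigma_1 p}{pq-(\gamma-1)^2}$. *)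

theory Defs
  imports "HOL-Analysis.Analysis"
begin

definition ball_mass :: "(real^'n \<Rightarrow> real) \<Rightarrow> real^'n \<Rightarrow> real \<Rightarrow> ennreal" where
  "ball_mass f x t = (\<integral>\<^sup>+ y. ennreal (f y) * indicator (ball x t) y \<partial>lebesgue)"

definition wolff :: "real \<Rightarrow> real \<Rightarrow> (real^'n \<Rightarrow> real) \<Rightarrow> real^'n \<Rightarrow> ennreal" where
  "wolff \<beta> \<gamma> f x =
     (\<integral>\<^sup>+ t. (if ball_mass f x t = \<infinity> then \<infinity>
               else ennreal (((enn2real (ball_mass f x t) / t powr (real CARD('n) - \<beta> * \<gamma>))
                              powr (1 / (\<gamma> - 1))) / t))
            * indicator {0<..} t \<partial>lborel)"

definition L1_loc :: "(real^'n \<Rightarrow> real) \<Rightarrow> bool" where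
  "L1_loc f \<longleftrightarrow> f \<in> borel_measurable lebesgue \<and>
     (\<forall>K. compact K \<longrightarrow> set_integrable lebesgue K f)"

definition double_bounded :: "(real^'n \<Rightarrow> real) \<Rightarrow> bool" where
  "double_bounded c \<longleftrightarrow> (\<exists>C>0. \<forall>x. 1 / C \<le> c x \<and> c x \<le> C)"

definition positive_solution ::
  "real \<Rightarrow> real \<Rightarrow> real \<Rightarrow> real \<Rightarrow> real \<Rightarrow> real \<Rightarrow>
   (real^'n \<Rightarrow> real) \<Rightarrow> (real^'n \<Rightarrow> real) \<Rightarrow> (real^'n \<Rightarrow> real) \<Rightarrow> (real^'n \<Rightarrow> real) \<Rightarrow> bool" where
  "positive_solution \<beta> \<gamma> p q \<sigma>1 \<sigma>2 c1 c2 u v \<longleftrightarrow>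
     L1_loc u \<and> L1_loc v \<and> (\<forall>x. u x > 0) \<and> (\<forall>x. v x > 0) \<and>
     (AE x in lebesgue. ennreal (u x) = ennreal (c1 x) * wolff \<beta> \<gamma> (\<lambda>y. norm y powr \<sigma>1 * v y powr q) x) \<and>
     (AE x in lebesgue. ennreal (v x) = ennreal (c2 x) * wolff \<beta> \<gamma> (\<lambda>y. norm y powr \<sigma>2 * u y powr p) x)"

definition q0 :: "real \<Rightarrow> real \<Rightarrow> real \<Rightarrow> real \<Rightarrow> real \<Rightarrow> real \<Rightarrow> real" where
  "q0 \<beta> \<gamma> p q \<sigma>1 \<sigma>2 =
     (\<beta> * \<gamma> * (\<gamma> - 1 + q) + (\<gamma> - 1) * \<sigma>1 + \<sigma>2 * q) / (p * q - (\<gamma> - 1)^2)"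

definition p0 :: "real \<Rightarrow> real \<Rightarrow> real \<Rightarrow> real \<Rightarrow> real \<Rightarrow> real \<Rightarrow> real" where
  "p0 \<beta> \<gamma> p q \<sigma>1 \<sigma>2 =
     (\<beta> * \<gamma> * (\<gamma> - 1 + p) + (\<gamma> - 1) * \<sigma>2 + \<sigma>1 * p) / (p * q - (\<gamma> - 1)^2)"

end

theory Submission
  imports Defs
begin

text \<open>We look for solutions \<open>u = (1 + |x|) powr -Q\<close>, \<open>v = (1 + |x|) powr -P\<close> with \<open>Q = q\<^sub>0\<close> and
  \<open>P = p\<^sub>0\<close>. These exponents solve the linear system that makes the source term \<open>|y| powr \<sigma>\<^sub>1 * v powr q\<close>
  equal to \<open>|y| powr \<sigma>\<^sub>1 * (1 + |y|) powr -(m + \<sigma>\<^sub>1)\<close> with \<open>m = \<beta>\<gamma> + Q(\<gamma> - 1)\<close>, and symmetrically for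
  the second equation; the hypothesis on \<open>max q\<^sub>0 p\<^sub>0\<close> says exactly \<open>\<beta>\<gamma> < m < n\<close>. Such a weight has mass
  about \<open>t\<^sup>n |x| powr -m\<close> on balls \<open>B\<^sub>t(x)\<close> with \<open>t \<le> |x|/2\<close>, at most \<open>t powr (n - m)\<close> on larger balls and at
  most \<open>t powr (n + min \<sigma> 0)\<close> near the origin. Integrating these bounds in the Wolff potential shows that
  \<open>W(|y| powr \<sigma>\<^sub>1 * v powr q)\<close> is comparable to \<open>(1 + |x|) powr -Q = u\<close>, so \<open>c\<^sub>1 = u / W(\<dots>)\<close> is double
  bounded and the equations hold by construction.\<close>

section \<open>Wolff potentials from bounds on ball masses\<close>

definition wolff_integrand :: "real \<Rightarrow> real \<Rightarrow> (real^'n \<Rightarrow> real) \<Rightarrow> real^'n \<Rightarrow> real \<Rightarrow> ennreal" where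
  "wolff_integrand \<beta> \<gamma> f x t = (if ball_mass f x t = \<infinity> then \<infinity>
     else ennreal (((enn2real (ball_mass f x t) / t powr (real CARD('n) - \<beta> * \<gamma>))
                    powr (1 / (\<gamma> - 1))) / t))"

lemma wolff_eq_nn_integral_integrand:
  "wolff \<beta> \<gamma> f x = (\<integral>\<^sup>+ t. wolff_integrand \<beta> \<gamma> f x t * indicator {0<..} t \<partial>lborel)"
  by (simp add: wolff_def wolff_integrand_def)

lemma wolff_integrand_le:
  fixes f :: "real^'n \<Rightarrow> real"
  assumes "t > 0" "B \<ge> 0" "ball_mass f x t \<le> ennreal B" "\<gamma> > 1"
  shows "wolff_integrand \<beta> \<gamma> f x t
           \<le> ennreal ((B / t powr (real CARD('n) - \<beta> * \<gamma>)) powr (1 / (\<gamma> - 1)) / t)"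
proof -
  have fin: "ball_mass f x t \<noteq> \<infinity>"
    using assms(3) by (metis ennreal_neq_top infinity_ennreal_def top.extremum_uniqueI)
  have "enn2real (ball_mass f x t) \<le> B"
    using assms by (intro enn2real_leI) auto
  then have "(enn2real (ball_mass f x t) / t powr (real CARD('n) - \<beta> * \<gamma>)) powr (1 / (\<gamma> - 1))
             \<le> (B / t powr (real CARD('n) - \<beta> * \<gamma>)) powr (1 / (\<gamma> - 1))"
    using assms by (intro powr_mono2 divide_right_mono) auto
  then show ?thesis
    using fin assms unfolding wolff_integrand_def by (auto intro!: ennreal_leI divide_right_mono)
qed

lemma wolff_integrand_ge:
  fixes f :: "real^'n \<Rightarrow> real"
  assumes "t > 0" "B \<ge> 0" "ennreal B \<le> ball_mass f x t" "\<gamma> > 1"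
  shows "ennreal ((B / t powr (real CARD('n) - \<beta> * \<gamma>)) powr (1 / (\<gamma> - 1)) / t)
           \<le> wolff_integrand \<beta> \<gamma> f x t"
proof (cases "ball_mass f x t = \<infinity>")
  case True
  then show ?thesis by (simp add: wolff_integrand_def)
next
  case False
  have "B \<le> enn2real (ball_mass f x t)"
    using assms False by (metis enn2real_ennreal enn2real_mono infinity_ennreal_def top.not_eq_extremum)
  then have "(B / t powr (real CARD('n) - \<beta> * \<gamma>)) powr (1 / (\<gamma> - 1))
             \<le> (enn2real (ball_mass f x t) / t powr (real CARD('n) - \<beta> * \<gamma>)) powr (1 / (\<gamma> - 1))"
    using assms by (intro powr_mono2 divide_right_mono) auto
  then show ?thesis
    using False assms unfolding wolff_integrand_def by (auto intro!: ennreal_leI divide_right_mono)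
qed

lemma powr_mult_powr_divide_powr:
  fixes K t :: real
  assumes "K \<ge> 0" "t > 0"
  shows "(K * t powr c / t powr e) powr a / t = K powr a * t powr ((c - e) * a - 1)"
proof -
  have "K * t powr c / t powr e = K * t powr (c - e)"
    by (simp add: powr_diff)
  then have "(K * t powr c / t powr e) powr a = K powr a * t powr ((c - e) * a)"
    using assms by (simp add: powr_mult powr_powr)
  then show ?thesis
    using assms by (simp add: powr_diff)
qed

lemma nn_integral_powr_Icc_0:
  assumes "b > 0" "R \<ge> 0"
  shows "(\<integral>\<^sup>+ t. ennreal (t powr (b - 1)) * indicator {0..R} t \<partial>lborel) = ennreal (R powr b / b)"
proof -
  have "((\<lambda>t. t powr (b - 1)) has_integral (R powr (b - 1 + 1) / (b - 1 + 1))) {0..R}"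
    by (rule has_integral_powr_from_0) (use assms in auto)
  from nn_integral_has_integral_lebesgue'[OF _ this] show ?thesis by simp
qed

lemma nn_integral_powr_Ici:
  assumes "b > 0" "R > 0"
  shows "(\<integral>\<^sup>+ t. ennreal (t powr (- b - 1)) * indicator {R..} t \<partial>lborel) = ennreal (R powr (- b) / b)"
proof -
  have "((\<lambda>t. t powr (- b - 1)) has_integral (- (R powr (- b - 1 + 1)) / (- b - 1 + 1))) {R..}"
    by (rule has_integral_powr_to_inf) (use assms in auto)
  from nn_integral_has_integral_lebesgue'[OF _ this] show ?thesis by simp
qed

lemma nn_integral_cmult_powr_Icc_0:
  assumes "K \<ge> 0" "b > 0" "R \<ge> 0"
  shows "(\<integral>\<^sup>+ t. ennreal (K * t powr (b - 1)) * indicator {0..R} t \<partial>lborel)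
           = ennreal (K * (R powr b / b))"
proof -
  have "(\<integral>\<^sup>+ t. ennreal (K * t powr (b - 1)) * indicator {0..R} t \<partial>lborel)
        = ennreal K * (\<integral>\<^sup>+ t. ennreal (t powr (b - 1)) * indicator {0..R} t \<partial>lborel)"
    using assms(1) by (subst nn_integral_cmult[symmetric]) (auto simp: ennreal_mult mult.assoc)
  then show ?thesis
    using nn_integral_powr_Icc_0[OF assms(2,3)] assms by (simp add: ennreal_mult[symmetric] del: ennreal_mult)
qed

lemma nn_integral_cmult_powr_Ici:
  assumes "K \<ge> 0" "b > 0" "R > 0"
  shows "(\<integral>\<^sup>+ t. ennreal (K * t powr (- b - 1)) * indicator {R..} t \<partial>lborel)
           = ennreal (K * (R powr (- b) / b))"
proof -
  have "(\<integral>\<^sup>+ t. ennreal (K * t powr (- b - 1)) * indicator {R..} t \<partial>lborel)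
        = ennreal K * (\<integral>\<^sup>+ t. ennreal (t powr (- b - 1)) * indicator {R..} t \<partial>lborel)"
    using assms(1) by (subst nn_integral_cmult[symmetric]) (auto simp: ennreal_mult mult.assoc)
  then show ?thesis
    using nn_integral_powr_Ici[OF assms(2,3)] assms by (simp add: ennreal_mult[symmetric] del: ennreal_mult)
qed

lemma wolff_le_of_ball_mass_le:
  fixes f :: "real^'n \<Rightarrow> real" and \<beta> \<gamma> :: real
  defines "e \<equiv> real CARD('n) - \<beta> * \<gamma>"
  assumes \<gamma>: "\<gamma> > 1" and R: "R > 0" and K: "K1 \<ge> 0" "K2 \<ge> 0"
    and b1: "b1 = (c1 - e) / (\<gamma> - 1)" "b1 > 0"
    and b2: "b2 = (e - c2) / (\<gamma> - 1)" "b2 > 0"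
    and near: "\<And>t. 0 < t \<Longrightarrow> t \<le> R \<Longrightarrow> ball_mass f x t \<le> ennreal (K1 * t powr c1)"
    and far: "\<And>t. R \<le> t \<Longrightarrow> ball_mass f x t \<le> ennreal (K2 * t powr c2)"
  shows "wolff \<beta> \<gamma> f x
           \<le> ennreal (K1 powr (1 / (\<gamma> - 1)) * R powr b1 / b1 + K2 powr (1 / (\<gamma> - 1)) * R powr (- b2) / b2)"
proof -
  let ?a = "1 / (\<gamma> - 1)"
  have split: "wolff_integrand \<beta> \<gamma> f x t * indicator {0<..} t \<le>
      ennreal (K1 powr ?a * t powr (b1 - 1)) * indicator {0..R} t +
      ennreal (K2 powr ?a * t powr (- b2 - 1)) * indicator {R..} t" for t
  proof (cases "t > 0")
    case t: True
    show ?thesis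
    proof (cases "t \<le> R")
      case True
      have "wolff_integrand \<beta> \<gamma> f x t \<le> ennreal ((K1 * t powr c1 / t powr e) powr ?a / t)"
        unfolding e_def using t K \<gamma> near[OF t True] by (intro wolff_integrand_le) auto
      also have "\<dots> = ennreal (K1 powr ?a * t powr (b1 - 1))"
        using powr_mult_powr_divide_powr[OF K(1) t] b1 by simp
      finally show ?thesis
        using True t by (simp add: indicator_def add_increasing2)
    next
      case False
      have "wolff_integrand \<beta> \<gamma> f x t \<le> ennreal ((K2 * t powr c2 / t powr e) powr ?a / t)"
        unfolding e_def using t K \<gamma> far False by (intro wolff_integrand_le) auto
      also have "\<dots> = ennreal (K2 powr ?a * t powr (- b2 - 1))"
        using powr_mult_powr_divide_powr[OF K(2) t, of c2 e ?a] b2 by (simp add: diff_divide_distrib)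
      finally show ?thesis
        using False t by (simp add: indicator_def)
    qed
  qed simp
  have "wolff \<beta> \<gamma> f x \<le> (\<integral>\<^sup>+ t. ennreal (K1 powr ?a * t powr (b1 - 1)) * indicator {0..R} t +
      ennreal (K2 powr ?a * t powr (- b2 - 1)) * indicator {R..} t \<partial>lborel)"
    unfolding wolff_eq_nn_integral_integrand by (intro nn_integral_mono split)
  also have "\<dots> = ennreal (K1 powr ?a * (R powr b1 / b1)) + ennreal (K2 powr ?a * (R powr (- b2) / b2))"
    using b1(2) b2(2) R
    by (simp add: nn_integral_add nn_integral_cmult_powr_Icc_0 nn_integral_cmult_powr_Ici)
  finally show ?thesis
    using b1(2) b2(2) R by (simp add: ennreal_plus[symmetric] del: ennreal_plus)
qed

lemma wolff_ge_of_ball_mass_ge: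
  fixes f :: "real^'n \<Rightarrow> real" and \<beta> \<gamma> :: real
  defines "e \<equiv> real CARD('n) - \<beta> * \<gamma>"
  assumes \<gamma>: "\<gamma> > 1" and R: "R > 0" and K: "K \<ge> 0"
    and b: "b = (c - e) / (\<gamma> - 1)" "b > 0"
    and mass: "\<And>t. 0 < t \<Longrightarrow> t \<le> R \<Longrightarrow> ennreal (K * t powr c) \<le> ball_mass f x t"
  shows "ennreal (K powr (1 / (\<gamma> - 1)) * R powr b / b) \<le> wolff \<beta> \<gamma> f x"
proof -
  let ?a = "1 / (\<gamma> - 1)"
  have restrict: "ennreal (K powr ?a * t powr (b - 1)) * indicator {0..R} t
                  \<le> wolff_integrand \<beta> \<gamma> f x t * indicator {0<..} t" for t
  proof (cases "0 < t \<and> t \<le> R")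
    case True
    then have t: "t > 0" "t \<le> R" by auto
    have "ennreal (K powr ?a * t powr (b - 1)) = ennreal ((K * t powr c / t powr e) powr ?a / t)"
      using powr_mult_powr_divide_powr[OF K t(1)] b by simp
    also have "\<dots> \<le> wolff_integrand \<beta> \<gamma> f x t"
      unfolding e_def using t K \<gamma> mass[OF t] by (intro wolff_integrand_ge) auto
    finally show ?thesis using t by simp
  qed (auto simp: indicator_def)
  have "ennreal (K powr ?a * (R powr b / b))
        = (\<integral>\<^sup>+ t. ennreal (K powr ?a * t powr (b - 1)) * indicator {0..R} t \<partial>lborel)"
    using b(2) R by (simp add: nn_integral_cmult_powr_Icc_0)
  also have "\<dots> \<le> wolff \<beta> \<gamma> f x"
    unfolding wolff_eq_nn_integral_integrand by (intro nn_integral_mono restrict)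
  finally show ?thesis by simp
qed

lemma wolff_ge_of_ball_mass_ge_const:
  fixes f :: "real^'n \<Rightarrow> real" and \<beta> \<gamma> :: real
  defines "e \<equiv> real CARD('n) - \<beta> * \<gamma>"
  assumes \<gamma>: "\<gamma> > 1" and e: "e \<ge> 0" and R: "R > 0" and c: "c \<ge> 0"
    and mass: "\<And>t. R \<le> t \<Longrightarrow> ennreal c \<le> ball_mass f x t"
  shows "ennreal ((c / (2 * R) powr e) powr (1 / (\<gamma> - 1)) / 2) \<le> wolff \<beta> \<gamma> f x"
proof -
  let ?L = "(c / (2 * R) powr e) powr (1 / (\<gamma> - 1)) / (2 * R)"
  have restrict: "ennreal ?L * indicator {R..2 * R} t \<le> wolff_integrand \<beta> \<gamma> f x t * indicator {0<..} t"
    for t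
  proof (cases "R \<le> t \<and> t \<le> 2 * R")
    case True
    have "c / (2 * R) powr e \<le> c / t powr e"
      using True e c R by (intro divide_left_mono powr_mono2 mult_pos_pos) auto
    then have "(c / (2 * R) powr e) powr (1 / (\<gamma> - 1)) \<le> (c / t powr e) powr (1 / (\<gamma> - 1))"
      using \<gamma> c by (intro powr_mono2) auto
    then have "?L \<le> (c / t powr e) powr (1 / (\<gamma> - 1)) / t"
      using True R by (intro frac_le) auto
    then have "ennreal ?L \<le> ennreal ((c / t powr e) powr (1 / (\<gamma> - 1)) / t)"
      by (rule ennreal_leI)
    also have "\<dots> \<le> wolff_integrand \<beta> \<gamma> f x t"
      unfolding e_def using True R c \<gamma> mass[of t] by (intro wolff_integrand_ge) auto
    finally show ?thesis using True R by simp
  qed (auto simp: indicator_def)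
  have "ennreal ((c / (2 * R) powr e) powr (1 / (\<gamma> - 1)) / 2)
        = (\<integral>\<^sup>+ t. ennreal ?L * indicator {R..2 * R} t \<partial>lborel)"
    using R by (simp add: nn_integral_cmult_indicator ennreal_mult[symmetric] del: ennreal_mult)
  also have "\<dots> \<le> wolff \<beta> \<gamma> f x"
    unfolding wolff_eq_nn_integral_integrand by (intro nn_integral_mono restrict)
  finally show ?thesis .
qed

section \<open>Integrals over balls\<close>

lemma nn_integral_const_ball:
  fixes x :: "real^'n"
  assumes "c \<ge> 0" "t \<ge> 0"
  shows "(\<integral>\<^sup>+ y. ennreal c * indicator (ball x t) y \<partial>lebesgue)
           = ennreal (c * unit_ball_vol (CARD('n)) * t ^ CARD('n))"
proof -
  have "(\<integral>\<^sup>+ y. ennreal c * indicator (ball x t) y \<partial>lebesgue) = ennreal c * emeasure lebesgue (ball x t)"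
    by (rule nn_integral_cmult_indicator) (rule fmeasurableD[OF lmeasurable_ball])
  then show ?thesis
    using assms by (simp add: emeasure_ball ennreal_mult[symmetric] mult.assoc del: ennreal_mult)
qed

lemma ball_mass_mono:
  assumes "\<And>y. y \<in> ball x t \<Longrightarrow> f y \<le> g y"
  shows "ball_mass f x t \<le> ball_mass g x t"
  unfolding ball_mass_def using assms
  by (intro nn_integral_mono) (auto simp: indicator_def intro: ennreal_leI)

lemma ball_mass_le_const:
  fixes x :: "real^'n"
  assumes "c \<ge> 0" "t \<ge> 0" "\<And>y. y \<in> ball x t \<Longrightarrow> f y \<le> c"
  shows "ball_mass f x t \<le> ennreal (c * unit_ball_vol (CARD('n)) * t ^ CARD('n))"
proof -
  have "ball_mass f x t \<le> ball_mass (\<lambda>_. c) x t"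
    using assms(3) by (rule ball_mass_mono)
  then show ?thesis
    using nn_integral_const_ball[OF assms(1,2), where x=x] by (simp add: ball_mass_def)
qed

lemma ball_mass_ge_const:
  fixes x z :: "real^'n"
  assumes "c \<ge> 0" "r \<ge> 0" "ball z r \<subseteq> ball x t" "\<And>y. y \<in> ball z r \<Longrightarrow> c \<le> f y"
  shows "ennreal (c * unit_ball_vol (CARD('n)) * r ^ CARD('n)) \<le> ball_mass f x t"
proof -
  have "ennreal (c * unit_ball_vol (CARD('n)) * r ^ CARD('n))
        = (\<integral>\<^sup>+ y. ennreal c * indicator (ball z r) y \<partial>lebesgue)"
    using nn_integral_const_ball[OF assms(1,2), where x=z] by simp
  also have "\<dots> \<le> ball_mass f x t"
    unfolding ball_mass_def using assms(3,4)
    by (intro nn_integral_mono) (auto simp: indicator_def intro: ennreal_leI)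
  finally show ?thesis .
qed

lemma norm_powr_le_dyadic_sum:
  fixes y :: "real^'n"
  assumes "r > 0" "s > 0"
  shows "ennreal (norm y powr (- s)) * indicator (ball 0 r) y \<le>
     (\<Sum>k. ennreal ((r * 2 powr (- real (Suc k))) powr (- s)) * indicator (ball 0 (r * 2 powr (- real k))) y)"
proof (cases "y \<in> ball 0 r \<and> y \<noteq> 0")
  case True
  let ?P = "\<lambda>j::nat. r * 2 powr (- real j) \<le> norm y"
  have ny: "norm y > 0" "norm y < r"
    using True by auto
  obtain j where j: "(1/2::real) ^ j < norm y / r"
    using real_arch_pow_inv[of "norm y / r" "1/2"] ny assms by auto
  have pow: "2 powr (- real i) = (1/2::real) ^ i" for i
    by (simp add: powr_minus powr_realpow power_one_over inverse_eq_divide)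
  have "?P j"
    using j assms by (simp add: pow field_simps)
  moreover have "\<not> ?P 0"
    using ny by simp
  ultimately obtain k where k: "\<not> ?P k" "?P (Suc k)"
    using ex_least_nat_less[of ?P j] by auto
  have "norm y powr (- s) \<le> (r * 2 powr (- real (Suc k))) powr (- s)"
    using k assms by (intro powr_mono2') auto
  then have "ennreal (norm y powr (- s)) * indicator (ball 0 r) y \<le>
      ennreal ((r * 2 powr (- real (Suc k))) powr (- s)) * indicator (ball 0 (r * 2 powr (- real k))) y"
    using k True by (auto simp: indicator_def)
  also have "\<dots> \<le> (\<Sum>k. ennreal ((r * 2 powr (- real (Suc k))) powr (- s)) * indicator (ball 0 (r * 2 powr (- real k))) y)"
    using sum_le_suminf[OF summableI, of "{k}"] by simp
  finally show ?thesis .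
qed auto

lemma dyadic_term_eq:
  assumes "r > 0" "s > 0"
  shows "(r * 2 powr (- real (Suc k))) powr (- s) * (V * (r * 2 powr (- real k)) ^ n)
           = V * 2 powr s * r powr (real n - s) * (2 powr (s - real n)) ^ k"
proof -
  have two_powr: "(2::real) powr (x * real j) = (2 powr x) ^ j" for x j
    by (simp add: powr_powr[symmetric] powr_realpow)
  have a1: "(r * 2 powr (- real (Suc k))) powr (- s) = r powr (- s) * 2 powr (s * real (Suc k))"
    using assms by (simp add: powr_mult powr_powr algebra_simps)
  have a2: "(2::real) powr (s * real (Suc k)) = 2 powr s * (2 powr s) ^ k"
    by (simp add: two_powr[symmetric] powr_add[symmetric] algebra_simps)
  have b1: "(r * 2 powr (- real k)) ^ n = r ^ n * (2 powr (- real k)) ^ n"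
    by (simp add: power_mult_distrib)
  have b2: "((2::real) powr (- real k)) ^ n = (2 powr (- real n)) ^ k"
    by (simp add: two_powr[symmetric] powr_realpow[symmetric] powr_powr mult.commute)
  have b3: "r ^ n = r powr real n"
    using assms by (simp add: powr_realpow)
  have c: "(2 powr s) ^ k * (2 powr - real n) ^ k = ((2::real) powr (s - real n)) ^ k"
    by (simp add: power_mult_distrib[symmetric] powr_add[symmetric])
  have d: "r powr (- s) * r powr (real n) = r powr (real n - s)"
    by (simp add: powr_add[symmetric])
  show ?thesis
    unfolding a1 a2 b1 b2 b3 c[symmetric] d[symmetric] by (simp only: mult_ac)
qed

text \<open>Dominate the weight by dyadic balls \<open>B(0, r 2\<^sup>-\<^sup>k)\<close>, each carrying the value of \<open>|y| powr -s\<close> at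
  radius \<open>r 2\<^sup>-\<^sup>k\<^sup>-\<^sup>1\<close>; the resulting series is geometric with ratio \<open>2 powr (s - n) < 1\<close>.\<close>
lemma nn_integral_norm_powr_ball_le:
  assumes "0 < s" "s < real CARD('n)"
  obtains D where "D \<ge> 0"
    and "\<And>r. r > 0 \<Longrightarrow> (\<integral>\<^sup>+ y. ennreal (norm (y::real^'n) powr (- s)) * indicator (ball 0 r) y \<partial>lebesgue)
                          \<le> ennreal (D * r powr (real CARD('n) - s))"
proof
  let ?n = "CARD('n)"
  let ?V = "unit_ball_vol (real ?n)"
  let ?q = "2 powr (s - real ?n) :: real"
  have q: "?q < 1"
    using powr_less_mono[of "s - real ?n" 0 2] assms by simp
  show "?V * 2 powr s / (1 - ?q) \<ge> 0"
    using q by simp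
  fix r :: real
  assume r: "r > 0"
  let ?a = "\<lambda>k. (r * 2 powr (- real (Suc k))) powr (- s)"
  let ?b = "\<lambda>k. r * 2 powr (- real k)"
  have "(\<integral>\<^sup>+ y. ennreal (norm (y::real^'n) powr (- s)) * indicator (ball 0 r) y \<partial>lebesgue)
        \<le> (\<integral>\<^sup>+ y. (\<Sum>k. ennreal (?a k) * indicator (ball 0 (?b k)) (y::real^'n)) \<partial>lebesgue)"
    by (intro nn_integral_mono norm_powr_le_dyadic_sum r assms)
  also have "\<dots> = (\<Sum>k. \<integral>\<^sup>+ y. ennreal (?a k) * indicator (ball 0 (?b k)) (y::real^'n) \<partial>lebesgue)"
    by (intro nn_integral_suminf borel_measurable_times_ennreal borel_measurable_indicator
        fmeasurableD[OF lmeasurable_ball] borel_measurable_const)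
  also have "\<dots> = (\<Sum>k. ennreal (?V * 2 powr s * r powr (real ?n - s) * ?q ^ k))"
  proof (intro suminf_cong)
    fix k
    have "(\<integral>\<^sup>+ y. ennreal (?a k) * indicator (ball 0 (?b k)) (y::real^'n) \<partial>lebesgue)
          = ennreal (?a k * ?V * ?b k ^ ?n)"
      using r by (intro nn_integral_const_ball) auto
    also have "?a k * ?V * ?b k ^ ?n = ?V * 2 powr s * r powr (real ?n - s) * ?q ^ k"
      using dyadic_term_eq[OF r assms(1), of k ?V ?n] by (simp only: mult.assoc)
    finally show "(\<integral>\<^sup>+ y. ennreal (?a k) * indicator (ball 0 (?b k)) (y::real^'n) \<partial>lebesgue)
                  = ennreal (?V * 2 powr s * r powr (real ?n - s) * ?q ^ k)" .
  qed
  also have "\<dots> = ennreal (?V * 2 powr s * r powr (real ?n - s) * (1 / (1 - ?q)))"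
    using q by (intro suminf_ennreal_eq sums_mult geometric_sums) auto
  finally show "(\<integral>\<^sup>+ y. ennreal (norm (y::real^'n) powr (- s)) * indicator (ball 0 r) y \<partial>lebesgue)
                \<le> ennreal (?V * 2 powr s / (1 - ?q) * r powr (real ?n - s))"
    by (simp add: mult_ac)
qed

section \<open>Mass of power profiles on balls\<close>

definition power_profile :: "real \<Rightarrow> real \<Rightarrow> 'a::real_normed_vector \<Rightarrow> real" where
  "power_profile \<sigma> m y = norm y powr \<sigma> * (1 + norm y) powr (- (m + \<sigma>))"

lemma power_profile_le_norm_powr:
  assumes "0 \<le> m + \<sigma>"
  shows "power_profile \<sigma> m y \<le> norm y powr \<sigma>"
proof -
  have "(1 + norm y) powr (- (m + \<sigma>)) \<le> 1 powr (- (m + \<sigma>))"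
    using assms by (intro powr_mono2') auto
  then show ?thesis
    unfolding power_profile_def by (intro mult_left_le) auto
qed

lemma power_profile_le_decay:
  assumes "0 \<le> m + \<sigma>"
  shows "power_profile \<sigma> m y \<le> norm y powr (- m)"
proof (cases "y = 0")
  case False
  have "(1 + norm y) powr (- (m + \<sigma>)) \<le> norm y powr (- (m + \<sigma>))"
    using False assms by (intro powr_mono2') auto
  then have "power_profile \<sigma> m y \<le> norm y powr \<sigma> * norm y powr (- (m + \<sigma>))"
    unfolding power_profile_def by (intro mult_left_mono) auto
  also have "\<dots> = norm y powr (- m)"
    by (simp add: powr_add[symmetric])
  finally show ?thesis .
qed (simp add: power_profile_def)

lemma power_profile_ge_decay:
  assumes "0 \<le> m + \<sigma>" "norm y \<ge> 1/2"
  shows "3 powr (- (m + \<sigma>)) * norm y powr (- m) \<le> power_profile \<sigma> m y"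
proof -
  have "(3 * norm y) powr (- (m + \<sigma>)) \<le> (1 + norm y) powr (- (m + \<sigma>))"
    using assms by (intro powr_mono2') auto
  then have "norm y powr \<sigma> * (3 * norm y) powr (- (m + \<sigma>)) \<le> power_profile \<sigma> m y"
    unfolding power_profile_def by (intro mult_left_mono) auto
  moreover have "norm y powr \<sigma> * (3 * norm y) powr (- (m + \<sigma>)) = 3 powr (- (m + \<sigma>)) * norm y powr (- m)"
    using assms by (simp add: powr_mult powr_add[symmetric] algebra_simps)
  ultimately show ?thesis by simp
qed

lemma ball_mass_power_profile_le_far:
  fixes x :: "real^'n"
  assumes "0 \<le> m + \<sigma>" "0 \<le> m" "0 < t" "t \<le> norm x / 2"
  shows "ball_mass (power_profile \<sigma> m) x t
           \<le> ennreal ((norm x / 2) powr (- m) * unit_ball_vol (CARD('n)) * t ^ CARD('n))"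
proof (rule ball_mass_le_const)
  fix y
  assume "y \<in> ball x t"
  then have "norm x / 2 \<le> norm y"
    using assms norm_triangle_sub[of x y] by (auto simp: dist_norm)
  then have "norm y powr (- m) \<le> (norm x / 2) powr (- m)"
    using assms by (intro powr_mono2') auto
  then show "power_profile \<sigma> m y \<le> (norm x / 2) powr (- m)"
    using power_profile_le_decay[OF assms(1), of y] by linarith
qed (use assms in auto)

lemma ball_mass_power_profile_le_large:
  assumes "0 \<le> m + \<sigma>" "0 < m" "m < real CARD('n)"
  obtains K where "K \<ge> 0"
    and "\<And>(x::real^'n) t. 0 < t \<Longrightarrow> norm x \<le> 2 * t \<Longrightarrow>
           ball_mass (power_profile \<sigma> m) x t \<le> ennreal (K * t powr (real CARD('n) - m))"
proof -
  obtain D where D: "D \<ge> 0"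
    and int: "\<And>r. r > 0 \<Longrightarrow> (\<integral>\<^sup>+ y. ennreal (norm (y::real^'n) powr (- m)) * indicator (ball 0 r) y \<partial>lebesgue)
                          \<le> ennreal (D * r powr (real CARD('n) - m))"
    using nn_integral_norm_powr_ball_le[OF assms(2,3)] by blast
  show ?thesis
  proof
    show "D * 3 powr (real CARD('n) - m) \<ge> 0"
      using D by simp
    fix x :: "real^'n" and t :: real
    assume t: "0 < t" "norm x \<le> 2 * t"
    have dominated: "ennreal (power_profile \<sigma> m y) * indicator (ball x t) y
                     \<le> ennreal (norm y powr (- m)) * indicator (ball 0 (3 * t)) y" for y
    proof (cases "y \<in> ball x t")
      case True
      then have "norm y < 3 * t"
        using t norm_triangle_sub[of y x] by (auto simp: dist_norm norm_minus_commute)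
      then show ?thesis
        using True power_profile_le_decay[OF assms(1), of y] by (simp add: ennreal_leI)
    qed simp
    have "ball_mass (power_profile \<sigma> m) x t
          \<le> (\<integral>\<^sup>+ y. ennreal (norm y powr (- m)) * indicator (ball 0 (3 * t)) (y::real^'n) \<partial>lebesgue)"
      unfolding ball_mass_def by (rule nn_integral_mono) (rule dominated)
    also have "\<dots> \<le> ennreal (D * (3 * t) powr (real CARD('n) - m))"
      using t by (intro int) auto
    finally show "ball_mass (power_profile \<sigma> m) x t
                  \<le> ennreal (D * 3 powr (real CARD('n) - m) * t powr (real CARD('n) - m))"
      using t by (simp add: powr_mult mult_ac)
  qed
qed

lemma ball_mass_norm_powr_le:
  assumes "- real CARD('n) < \<sigma>" "\<sigma> < 0"
  obtains E where "E \<ge> 0"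
    and "\<And>(x::real^'n) t. 0 < t \<Longrightarrow>
           ball_mass (\<lambda>y. norm y powr \<sigma>) x t \<le> ennreal (E * t powr (real CARD('n) + \<sigma>))"
proof -
  let ?V = "unit_ball_vol (real CARD('n))"
  obtain D where D: "D \<ge> 0"
    and int: "\<And>r. r > 0 \<Longrightarrow> (\<integral>\<^sup>+ y. ennreal (norm (y::real^'n) powr (- (- \<sigma>))) * indicator (ball 0 r) y \<partial>lebesgue)
                          \<le> ennreal (D * r powr (real CARD('n) - (- \<sigma>)))"
    using nn_integral_norm_powr_ball_le[of "- \<sigma>", where 'n='n] assms by auto
  show ?thesis
  proof
    show "?V + D \<ge> 0"
      using D by simp
    fix x :: "real^'n" and t :: real
    assume t: "0 < t"
    have split: "ennreal (norm y powr \<sigma>) * indicator (ball x t) y \<le>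
       ennreal (t powr \<sigma>) * indicator (ball x t) y + ennreal (norm y powr (- (- \<sigma>))) * indicator (ball 0 t) y"
      for y
    proof (cases "norm y \<ge> t")
      case True
      then have "norm y powr \<sigma> \<le> t powr \<sigma>"
        using t assms by (intro powr_mono2') auto
      then show ?thesis
        by (simp add: indicator_def add_increasing2)
    qed (auto simp: indicator_def add_increasing)
    have "ball_mass (\<lambda>y. norm y powr \<sigma>) x t \<le> (\<integral>\<^sup>+ y. ennreal (t powr \<sigma>) * indicator (ball x t) y +
         ennreal (norm y powr (- (- \<sigma>))) * indicator (ball 0 t) y \<partial>lebesgue)"
      unfolding ball_mass_def by (rule nn_integral_mono) (rule split)
    also have "\<dots> = (\<integral>\<^sup>+ y. ennreal (t powr \<sigma>) * indicator (ball x t) y \<partial>lebesgue) +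
         (\<integral>\<^sup>+ y. ennreal (norm y powr (- (- \<sigma>))) * indicator (ball 0 t) (y::real^'n) \<partial>lebesgue)"
      by (rule nn_integral_add)
        (intro borel_measurable_times_ennreal borel_measurable_indicator fmeasurableD[OF lmeasurable_ball]
           borel_measurable_const,
         intro borel_measurable_times_ennreal borel_measurable_indicator fmeasurableD[OF lmeasurable_ball],
         rule measurable_completion, measurable)
    also have "\<dots> \<le> ennreal (t powr \<sigma> * ?V * t ^ CARD('n)) + ennreal (D * t powr (real CARD('n) - (- \<sigma>)))"
      using t by (intro add_mono int) (simp_all add: nn_integral_const_ball)
    also have "\<dots> = ennreal ((?V + D) * t powr (real CARD('n) + \<sigma>))"
      using t D by (simp add: ennreal_plus[symmetric] powr_realpow[symmetric] powr_add[symmetric]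
          algebra_simps del: ennreal_plus)
    finally show "ball_mass (\<lambda>y. norm y powr \<sigma>) x t \<le> ennreal ((?V + D) * t powr (real CARD('n) + \<sigma>))" .
  qed
qed

lemma ball_mass_power_profile_le_near:
  assumes "0 \<le> m + \<sigma>" "- real CARD('n) < \<sigma>"
  obtains E where "E \<ge> 0"
    and "\<And>(x::real^'n) t. norm x \<le> 1 \<Longrightarrow> 0 < t \<Longrightarrow> t \<le> 2 \<Longrightarrow>
           ball_mass (power_profile \<sigma> m) x t \<le> ennreal (E * t powr (real CARD('n) + min \<sigma> 0))"
proof (cases "\<sigma> \<ge> 0")
  case True
  show ?thesis
  proof
    show "3 powr \<sigma> * unit_ball_vol (real CARD('n)) \<ge> 0"
      by simp
    fix x :: "real^'n" and t :: real
    assume x: "norm x \<le> 1" and t: "0 < t" "t \<le> 2"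
    have "ball_mass (power_profile \<sigma> m) x t \<le> ennreal (3 powr \<sigma> * unit_ball_vol (real CARD('n)) * t ^ CARD('n))"
    proof (rule ball_mass_le_const)
      fix y
      assume "y \<in> ball x t"
      then have "norm y \<le> 3"
        using x t norm_triangle_sub[of y x] by (auto simp: dist_norm norm_minus_commute)
      then have "norm y powr \<sigma> \<le> 3 powr \<sigma>"
        using True by (intro powr_mono2) auto
      then show "power_profile \<sigma> m y \<le> 3 powr \<sigma>"
        using power_profile_le_norm_powr[OF assms(1), of y] by linarith
    qed (use t in auto)
    then show "ball_mass (power_profile \<sigma> m) x t
               \<le> ennreal (3 powr \<sigma> * unit_ball_vol (real CARD('n)) * t powr (real CARD('n) + min \<sigma> 0))"
      using True t by (simp add: powr_realpow)
  qed
next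
  case False
  obtain E where "E \<ge> 0"
    and E: "\<And>(x::real^'n) t. 0 < t \<Longrightarrow>
              ball_mass (\<lambda>y. norm y powr \<sigma>) x t \<le> ennreal (E * t powr (real CARD('n) + \<sigma>))"
    using ball_mass_norm_powr_le[of \<sigma>] assms False by auto
  then show ?thesis
    using that order_trans[OF ball_mass_mono[OF power_profile_le_norm_powr[OF assms(1)]] E] False
    by (simp add: min_def)
qed

lemma ball_mass_power_profile_ge_far:
  fixes x :: "real^'n"
  assumes "0 \<le> m + \<sigma>" "0 \<le> m" "1 \<le> norm x" "0 < t" "t \<le> norm x / 2"
  shows "ennreal (3 powr (- (m + \<sigma>)) * (3 * norm x / 2) powr (- m) * unit_ball_vol (CARD('n)) * t ^ CARD('n))
           \<le> ball_mass (power_profile \<sigma> m) x t"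
proof (rule ball_mass_ge_const)
  fix y
  assume "y \<in> ball x t"
  then have y: "norm x / 2 \<le> norm y" "norm y \<le> 3 * norm x / 2"
    using assms norm_triangle_sub[of x y] norm_triangle_sub[of y x]
    by (auto simp: dist_norm norm_minus_commute)
  then have "3 powr (- (m + \<sigma>)) * (3 * norm x / 2) powr (- m) \<le> 3 powr (- (m + \<sigma>)) * norm y powr (- m)"
    using assms by (intro mult_left_mono powr_mono2') auto
  also have "\<dots> \<le> power_profile \<sigma> m y"
    using y assms by (intro power_profile_ge_decay) auto
  finally show "3 powr (- (m + \<sigma>)) * (3 * norm x / 2) powr (- m) \<le> power_profile \<sigma> m y" .
qed (use assms in auto)

lemma ball_mass_power_profile_ge_large:
  assumes "0 \<le> m + \<sigma>" "0 \<le> m"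
  obtains c where "c > 0"
    and "\<And>(x::real^'n) t. norm x \<le> 1 \<Longrightarrow> 3 \<le> t \<Longrightarrow> ennreal c \<le> ball_mass (power_profile \<sigma> m) x t"
proof
  let ?c = "3 powr (- (m + \<sigma>)) * (3 / 2) powr (- m)"
  show "?c * unit_ball_vol (CARD('n)) * (1 / 2) ^ CARD('n) > 0"
    by simp
  fix x :: "real^'n" and t :: real
  assume x: "norm x \<le> 1" and t: "3 \<le> t"
  obtain z :: "real^'n" where z: "norm z = 1"
    using vector_choose_size[of 1] by auto
  show "ennreal (?c * unit_ball_vol (CARD('n)) * (1 / 2) ^ CARD('n)) \<le> ball_mass (power_profile \<sigma> m) x t"
  proof (rule ball_mass_ge_const)
    show "ball z (1 / 2) \<subseteq> ball x t"
    proof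
      fix y
      assume "y \<in> ball z (1 / 2)"
      then have "norm y < 3 / 2"
        using z norm_triangle_sub[of y z] by (auto simp: dist_norm norm_minus_commute)
      then show "y \<in> ball x t"
        using x t norm_triangle_ineq4[of y x] by (auto simp: dist_norm norm_minus_commute)
    qed
    fix y
    assume "y \<in> ball z (1 / 2)"
    then have y: "1 / 2 \<le> norm y" "norm y \<le> 3 / 2"
      using z norm_triangle_sub[of z y] norm_triangle_sub[of y z] by (auto simp: dist_norm norm_minus_commute)
    then have "?c \<le> 3 powr (- (m + \<sigma>)) * norm y powr (- m)"
      using assms by (intro mult_left_mono powr_mono2') auto
    also have "\<dots> \<le> power_profile \<sigma> m y"
      using y assms by (intro power_profile_ge_decay) auto
    finally show "?c \<le> power_profile \<sigma> m y" .
  qed auto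
qed

section \<open>Wolff potentials of power profiles\<close>

lemma upper_decay_of_near_far:
  fixes F :: "'a::real_normed_vector \<Rightarrow> ennreal"
  assumes "0 \<le> a"
    and far: "\<And>x. 1 \<le> norm x \<Longrightarrow> F x \<le> ennreal (C1 * norm x powr (- a))"
    and near: "\<And>x. norm x \<le> 1 \<Longrightarrow> F x \<le> ennreal C2"
  obtains C where "C > 0" "\<And>x. F x \<le> ennreal (C * (1 + norm x) powr (- a))"
proof
  let ?M = "max 1 (max C1 C2)"
  show "2 powr a * ?M > 0"
    by simp
  fix x :: 'a
  show "F x \<le> ennreal (2 powr a * ?M * (1 + norm x) powr (- a))"
  proof (cases "1 \<le> norm x")
    case True
    have "(2 * norm x) powr (- a) \<le> (1 + norm x) powr (- a)"
      using True assms(1) by (intro powr_mono2') auto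
    moreover have "norm x powr (- a) = 2 powr a * (2 * norm x) powr (- a)"
      by (simp add: powr_mult mult.assoc[symmetric] powr_add[symmetric])
    ultimately have "norm x powr (- a) \<le> 2 powr a * (1 + norm x) powr (- a)"
      by simp
    then have "C1 * norm x powr (- a) \<le> ?M * (2 powr a * (1 + norm x) powr (- a))"
      by (intro mult_mono) auto
    then show ?thesis
      using far[OF True] by (auto simp: mult_ac intro: order_trans ennreal_leI)
  next
    case False
    have "2 powr (- a) \<le> (1 + norm x) powr (- a)"
      using False assms(1) by (intro powr_mono2') (auto simp: add_pos_nonneg)
    then have "1 \<le> 2 powr a * (1 + norm x) powr (- a)"
      by (simp add: powr_minus field_simps)
    then have "C2 \<le> ?M * (2 powr a * (1 + norm x) powr (- a))"
      by (metis max.cobounded2 max.commute max.coboundedI2 mult_cancel_left1 mult_left_mono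
          order_trans zero_le_one)
    then show ?thesis
      using near[of x] False by (simp add: mult_ac) (meson ennreal_leI order_trans)
  qed
qed

lemma lower_decay_of_near_far:
  fixes F :: "'a::real_normed_vector \<Rightarrow> ennreal"
  assumes "0 \<le> a" "C1 > 0" "C2 > 0"
    and far: "\<And>x. 1 \<le> norm x \<Longrightarrow> ennreal (C1 * norm x powr (- a)) \<le> F x"
    and near: "\<And>x. norm x \<le> 1 \<Longrightarrow> ennreal C2 \<le> F x"
  shows "ennreal (min C1 C2 * (1 + norm x) powr (- a)) \<le> F x"
proof (cases "1 \<le> norm x")
  case True
  have "(1 + norm x) powr (- a) \<le> norm x powr (- a)"
    using True assms(1) by (intro powr_mono2') auto
  then have "min C1 C2 * (1 + norm x) powr (- a) \<le> C1 * norm x powr (- a)"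
    using assms by (intro mult_mono) auto
  then show ?thesis
    using far[OF True] by (auto intro: order_trans ennreal_leI)
next
  case False
  have "(1 + norm x) powr (- a) \<le> 1 powr (- a)"
    using assms(1) by (intro powr_mono2') auto
  then have "min C1 C2 * (1 + norm x) powr (- a) \<le> C2 * 1"
    using assms by (intro mult_mono) auto
  then show ?thesis
    using near False by (auto intro: order_trans ennreal_leI)
qed

context
  fixes \<beta> \<gamma> \<sigma> m :: real
  assumes \<beta>: "\<beta> > 0" and \<gamma>: "1 < \<gamma>" and \<sigma>: "- (\<beta> * \<gamma>) < \<sigma>"
    and m: "\<beta> * \<gamma> < m" "m < real CARD('n::finite)"
begin

lemma wolff_power_profile_le_far:
  obtains C where "\<And>x::real^'n. 1 \<le> norm x \<Longrightarrow>
    wolff \<beta> \<gamma> (power_profile \<sigma> m) x \<le> ennreal (C * norm x powr (- ((m - \<beta> * \<gamma>) / (\<gamma> - 1))))"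
proof -
  let ?V = "unit_ball_vol (real CARD('n))"
  let ?r = "1 / (\<gamma> - 1)"
  let ?d = "(m - \<beta> * \<gamma>) / (\<gamma> - 1)"
  let ?b = "\<beta> * \<gamma> / (\<gamma> - 1)"
  have "0 < \<beta> * \<gamma>"
    using \<beta> \<gamma> by simp
  then have k: "0 \<le> m + \<sigma>" and m0: "0 < m" and d: "?d > 0" and b: "?b > 0"
    using \<gamma> \<sigma> m by auto
  obtain K where K: "K \<ge> 0"
    and large: "\<And>(x::real^'n) t. 0 < t \<Longrightarrow> norm x \<le> 2 * t \<Longrightarrow>
                  ball_mass (power_profile \<sigma> m) x t \<le> ennreal (K * t powr (real CARD('n) - m))"
    using ball_mass_power_profile_le_large[OF k m0 m(2)] by blast
  show ?thesis
  proof
    fix x :: "real^'n"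
    assume x: "1 \<le> norm x"
    define R where "R = norm x / 2"
    have R: "R > 0"
      using x by (auto simp: R_def)
    have "wolff \<beta> \<gamma> (power_profile \<sigma> m) x
          \<le> ennreal ((R powr (- m) * ?V) powr ?r * R powr ?b / ?b + K powr ?r * R powr (- ?d) / ?d)"
    proof (rule wolff_le_of_ball_mass_le[OF \<gamma> R _ K _ b _ d])
      show "ball_mass (power_profile \<sigma> m) x t \<le> ennreal (R powr (- m) * ?V * t powr real CARD('n))"
        if "0 < t" "t \<le> R" for t
        using ball_mass_power_profile_le_far[OF k _ that(1), of x] that m0
        by (simp add: R_def powr_realpow)
      show "ball_mass (power_profile \<sigma> m) x t \<le> ennreal (K * t powr (real CARD('n) - m))"
        if "R \<le> t" for t
        using large[of t x] that R by (simp add: R_def)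
    qed (use \<gamma> in \<open>auto simp: diff_divide_distrib\<close>)
    also have "(R powr (- m) * ?V) powr ?r * R powr ?b = ?V powr ?r * R powr (- ?d)"
      using R by (simp add: powr_mult powr_powr powr_add[symmetric] mult_ac diff_divide_distrib)
    also have "R powr (- ?d) = 2 powr ?d * norm x powr (- ?d)"
      by (simp add: R_def powr_divide powr_minus divide_simps)
    finally show "wolff \<beta> \<gamma> (power_profile \<sigma> m) x
        \<le> ennreal (((?V powr ?r / ?b + K powr ?r / ?d) * 2 powr ?d) * norm x powr (- ?d))"
      by (simp add: algebra_simps)
  qed
qed

lemma wolff_power_profile_le_near:
  obtains C where "\<And>x::real^'n. norm x \<le> 1 \<Longrightarrow> wolff \<beta> \<gamma> (power_profile \<sigma> m) x \<le> ennreal C"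
proof -
  let ?r = "1 / (\<gamma> - 1)"
  let ?d = "(m - \<beta> * \<gamma>) / (\<gamma> - 1)"
  let ?b = "(\<beta> * \<gamma> + min \<sigma> 0) / (\<gamma> - 1)"
  have "0 < \<beta> * \<gamma>"
    using \<beta> \<gamma> by simp
  then have k: "0 \<le> m + \<sigma>" and m0: "0 < m" and \<sigma>n: "- real CARD('n) < \<sigma>"
    and d: "?d > 0" and b: "?b > 0"
    using \<gamma> \<sigma> m by auto
  obtain E where E: "E \<ge> 0"
    and near: "\<And>(x::real^'n) t. norm x \<le> 1 \<Longrightarrow> 0 < t \<Longrightarrow> t \<le> 2 \<Longrightarrow>
                 ball_mass (power_profile \<sigma> m) x t \<le> ennreal (E * t powr (real CARD('n) + min \<sigma> 0))"
    using ball_mass_power_profile_le_near[OF k \<sigma>n] by blast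
  obtain K where K: "K \<ge> 0"
    and large: "\<And>(x::real^'n) t. 0 < t \<Longrightarrow> norm x \<le> 2 * t \<Longrightarrow>
                  ball_mass (power_profile \<sigma> m) x t \<le> ennreal (K * t powr (real CARD('n) - m))"
    using ball_mass_power_profile_le_large[OF k m0 m(2)] by blast
  show ?thesis
  proof
    fix x :: "real^'n"
    assume x: "norm x \<le> 1"
    show "wolff \<beta> \<gamma> (power_profile \<sigma> m) x
          \<le> ennreal (E powr ?r * 2 powr ?b / ?b + K powr ?r * 2 powr (- ?d) / ?d)"
    proof (rule wolff_le_of_ball_mass_le[OF \<gamma> _ E K _ b _ d])
      show "ball_mass (power_profile \<sigma> m) x t \<le> ennreal (K * t powr (real CARD('n) - m))"
        if "2 \<le> t" for t
        using large[of t x] that x by simp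
    qed (use \<gamma> x near in \<open>auto simp: divide_simps\<close>)
  qed
qed

lemma wolff_power_profile_ge_far:
  obtains C where "C > 0" "\<And>x::real^'n. 1 \<le> norm x \<Longrightarrow>
    ennreal (C * norm x powr (- ((m - \<beta> * \<gamma>) / (\<gamma> - 1)))) \<le> wolff \<beta> \<gamma> (power_profile \<sigma> m) x"
proof
  let ?V = "unit_ball_vol (real CARD('n))"
  let ?r = "1 / (\<gamma> - 1)"
  let ?d = "(m - \<beta> * \<gamma>) / (\<gamma> - 1)"
  let ?b = "\<beta> * \<gamma> / (\<gamma> - 1)"
  let ?K = "3 powr (- (m + \<sigma>)) * (3 / 2) powr (- m) * ?V"
  have "0 < \<beta> * \<gamma>"
    using \<beta> \<gamma> by simp
  then have k: "0 \<le> m + \<sigma>" and m0: "0 \<le> m" and b: "?b > 0"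
    using \<gamma> \<sigma> m by auto
  show "?K powr ?r * 2 powr (- ?b) / ?b > 0"
    using b \<beta> \<gamma> by (intro divide_pos_pos mult_pos_pos) (auto simp: less_imp_neq[symmetric])
  fix x :: "real^'n"
  assume x: "1 \<le> norm x"
  define R where "R = norm x / 2"
  have R: "R > 0"
    using x by (auto simp: R_def)
  have split: "(3 * norm x / 2) powr (- m) = (3 / 2) powr (- m) * norm x powr (- m)"
    by (simp add: powr_mult[symmetric])
  have "ennreal ((?K * norm x powr (- m)) powr ?r * R powr ?b / ?b) \<le> wolff \<beta> \<gamma> (power_profile \<sigma> m) x"
  proof (rule wolff_ge_of_ball_mass_ge[OF \<gamma> R _ _ b])
    show "ennreal (?K * norm x powr (- m) * t powr real CARD('n)) \<le> ball_mass (power_profile \<sigma> m) x t"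
      if "0 < t" "t \<le> R" for t
      using ball_mass_power_profile_ge_far[OF k m0 x that(1)] that unfolding split
      by (simp add: R_def powr_realpow mult_ac)
  qed (use \<gamma> in \<open>auto simp: diff_divide_distrib\<close>)
  moreover have "(?K * norm x powr (- m)) powr ?r * R powr ?b = ?K powr ?r * 2 powr (- ?b) * norm x powr (- ?d)"
  proof -
    have "(?K * norm x powr (- m)) powr ?r = ?K powr ?r * norm x powr (- m * ?r)"
      by (simp add: powr_mult powr_powr)
    moreover have "R powr ?b = 2 powr (- ?b) * norm x powr ?b"
      by (simp add: R_def powr_divide powr_minus divide_simps)
    moreover have "norm x powr (- m * ?r) * norm x powr ?b = norm x powr (- ?d)"
      by (simp add: powr_add[symmetric] diff_divide_distrib)
    ultimately show ?thesis
      by (simp add: mult_ac)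
  qed
  ultimately show "ennreal (?K powr ?r * 2 powr (- ?b) / ?b * norm x powr (- ?d))
                   \<le> wolff \<beta> \<gamma> (power_profile \<sigma> m) x"
    by (simp add: mult_ac)
qed

lemma wolff_power_profile_ge_near:
  obtains C where "C > 0" "\<And>x::real^'n. norm x \<le> 1 \<Longrightarrow> ennreal C \<le> wolff \<beta> \<gamma> (power_profile \<sigma> m) x"
proof -
  have "0 < \<beta> * \<gamma>"
    using \<beta> \<gamma> by simp
  then have k: "0 \<le> m + \<sigma>" and m0: "0 \<le> m" and e: "0 \<le> real CARD('n) - \<beta> * \<gamma>"
    using \<sigma> m by auto
  obtain c where c: "c > 0"
    and large: "\<And>(x::real^'n) t. norm x \<le> 1 \<Longrightarrow> 3 \<le> t \<Longrightarrow> ennreal c \<le> ball_mass (power_profile \<sigma> m) x t"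
    using ball_mass_power_profile_ge_large[OF k m0] by blast
  show ?thesis
  proof
    show "(c / (2 * 3) powr (real CARD('n) - \<beta> * \<gamma>)) powr (1 / (\<gamma> - 1)) / 2 > 0"
      using c by simp
    show "ennreal ((c / (2 * 3) powr (real CARD('n) - \<beta> * \<gamma>)) powr (1 / (\<gamma> - 1)) / 2)
          \<le> wolff \<beta> \<gamma> (power_profile \<sigma> m) x" if "norm x \<le> 1" for x :: "real^'n"
      using c that by (intro wolff_ge_of_ball_mass_ge_const[OF \<gamma> e] large) auto
  qed
qed

lemma wolff_power_profile_comparable:
  obtains Clo Cup where "Clo > 0" "Cup > 0"
    and "\<And>x::real^'n. ennreal (Clo * (1 + norm x) powr (- ((m - \<beta> * \<gamma>) / (\<gamma> - 1))))
                        \<le> wolff \<beta> \<gamma> (power_profile \<sigma> m) x"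
    and "\<And>x::real^'n. wolff \<beta> \<gamma> (power_profile \<sigma> m) x
                        \<le> ennreal (Cup * (1 + norm x) powr (- ((m - \<beta> * \<gamma>) / (\<gamma> - 1))))"
proof -
  have d: "0 \<le> (m - \<beta> * \<gamma>) / (\<gamma> - 1)"
    using \<gamma> m by simp
  obtain C1 C2 C3 C4 where "C1 > 0" "C2 > 0"
    and "\<And>x::real^'n. 1 \<le> norm x \<Longrightarrow>
           ennreal (C1 * norm x powr (- ((m - \<beta> * \<gamma>) / (\<gamma> - 1)))) \<le> wolff \<beta> \<gamma> (power_profile \<sigma> m) x"
    and "\<And>x::real^'n. norm x \<le> 1 \<Longrightarrow> ennreal C2 \<le> wolff \<beta> \<gamma> (power_profile \<sigma> m) x"
    and "\<And>x::real^'n. 1 \<le> norm x \<Longrightarrow>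
           wolff \<beta> \<gamma> (power_profile \<sigma> m) x \<le> ennreal (C3 * norm x powr (- ((m - \<beta> * \<gamma>) / (\<gamma> - 1))))"
    and "\<And>x::real^'n. norm x \<le> 1 \<Longrightarrow> wolff \<beta> \<gamma> (power_profile \<sigma> m) x \<le> ennreal C4"
    using wolff_power_profile_ge_far wolff_power_profile_ge_near
      wolff_power_profile_le_far wolff_power_profile_le_near by metis
  then show ?thesis
    using that lower_decay_of_near_far[OF d] upper_decay_of_near_far[OF d]
    by (metis min_def)
qed

end

section \<open>Solutions with power decay\<close>

lemma double_bounded_quotient:
  fixes u :: "real^'n \<Rightarrow> real" and W :: "real^'n \<Rightarrow> ennreal"
  assumes Clo: "Clo > 0" and Cup: "Cup > 0" and u: "\<And>x. u x > 0"
    and lower: "\<And>x. ennreal (Clo * u x) \<le> W x" and upper: "\<And>x. W x \<le> ennreal (Cup * u x)"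
  obtains c where "double_bounded c" "\<And>x. ennreal (u x) = ennreal (c x) * W x"
proof
  let ?c = "\<lambda>x. u x / enn2real (W x)"
  have bounds: "1 / Cup \<le> ?c x \<and> ?c x \<le> 1 / Clo \<and> ennreal (u x) = ennreal (?c x) * W x" for x
  proof -
    define w where "w = enn2real (W x)"
    have "W x < top"
      using upper[of x] by (metis ennreal_less_top le_less_trans not_le top.not_eq_extremum)
    then have W: "W x = ennreal w"
      by (simp add: w_def)
    have lo: "Clo * u x \<le> w"
      using lower[of x] unfolding W by (simp add: w_def)
    have hi: "w \<le> Cup * u x"
      using upper[of x] Cup u[of x] unfolding W by (simp add: ennreal_le_iff2) (smt (verit) mult_pos_pos)
    have "w > 0"
      using lo Clo u[of x] by (smt (verit) mult_pos_pos)
    then show ?thesis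
      using lo hi Clo Cup u[of x] unfolding w_def[symmetric] W
      by (simp add: field_simps ennreal_mult[symmetric] del: ennreal_mult)
  qed
  show "double_bounded ?c"
    unfolding double_bounded_def
  proof (intro exI[of _ "max Cup (1 / Clo)"] conjI allI)
    fix x
    have "1 / max Cup (1 / Clo) \<le> 1 / Cup"
      using Cup by (simp add: frac_le)
    then show "1 / max Cup (1 / Clo) \<le> ?c x" "?c x \<le> max Cup (1 / Clo)"
      using bounds[of x] by linarith+
  qed (use Cup in simp)
  show "ennreal (u x) = ennreal (?c x) * W x" for x
    using bounds[of x] by blast
qed

lemma L1_loc_one_plus_norm_powr: "L1_loc (\<lambda>x::real^'n. (1 + norm x) powr a)"
  unfolding L1_loc_def
proof (intro conjI allI impI)
  show "(\<lambda>x::real^'n. (1 + norm x) powr a) \<in> borel_measurable lebesgue"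
    by (rule measurable_completion) measurable
  fix K :: "(real^'n) set"
  assume K: "compact K"
  then obtain b where b: "K \<subseteq> cbox (- b) b"
    using bounded_subset_cbox_symmetric[OF compact_imp_bounded] by blast
  have "continuous_on (cbox (- b) b) (\<lambda>x::real^'n. (1 + norm x) powr a)"
    by (intro continuous_intros) (smt (verit) norm_ge_zero)
  then have "(\<lambda>x::real^'n. (1 + norm x) powr a) absolutely_integrable_on cbox (- b) b"
    by (rule absolutely_integrable_continuous)
  then show "set_integrable lebesgue K (\<lambda>x::real^'n. (1 + norm x) powr a)"
    using set_integrable_subset[where M = lebesgue and A = "cbox (- b) b" and B = K]
      fmeasurableD[OF lmeasurable_compact[OF K]] b by blast
qed

text \<open>With \<open>m = \<beta>\<gamma> + Q(\<gamma> - 1)\<close> the source term is \<open>power_profile \<sigma> m\<close>, whose Wolff potential decays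
  at the rate \<open>(m - \<beta>\<gamma>)/(\<gamma> - 1) = Q\<close>.\<close>
lemma wolff_equation_power_decay:
  assumes \<beta>: "\<beta> > 0" and \<gamma>: "1 < \<gamma>" and \<sigma>: "- (\<beta> * \<gamma>) < \<sigma>"
    and Q: "Q > 0" "\<beta> * \<gamma> + Q * (\<gamma> - 1) < real CARD('n)"
    and P: "P * r = \<beta> * \<gamma> + Q * (\<gamma> - 1) + \<sigma>"
  obtains c :: "real^'n \<Rightarrow> real" where "double_bounded c"
    and "\<And>x. ennreal ((1 + norm x) powr (- Q))
               = ennreal (c x) * wolff \<beta> \<gamma> (\<lambda>y. norm y powr \<sigma> * ((1 + norm y) powr (- P)) powr r) x"
proof -
  define m where "m = \<beta> * \<gamma> + Q * (\<gamma> - 1)"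
  have m: "\<beta> * \<gamma> < m" "m < real CARD('n)" and decay: "(m - \<beta> * \<gamma>) / (\<gamma> - 1) = Q"
    using Q \<gamma> by (auto simp: m_def)
  have "- P * r = - (m + \<sigma>)"
    using P by (simp add: m_def)
  then have source: "(\<lambda>y. norm y powr \<sigma> * ((1 + norm y) powr (- P)) powr r) = power_profile \<sigma> m"
    by (simp add: power_profile_def powr_powr fun_eq_iff)
  obtain Clo Cup where "Clo > 0" "Cup > 0"
    and "\<And>x::real^'n. ennreal (Clo * (1 + norm x) powr (- Q)) \<le> wolff \<beta> \<gamma> (power_profile \<sigma> m) x"
    and "\<And>x::real^'n. wolff \<beta> \<gamma> (power_profile \<sigma> m) x \<le> ennreal (Cup * (1 + norm x) powr (- Q))"
    using wolff_power_profile_comparable[OF \<beta> \<gamma> \<sigma> m] unfolding decay by blast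
  then show ?thesis
    using that double_bounded_quotient[of Clo Cup "\<lambda>x::real^'n. (1 + norm x) powr (- Q)"]
    unfolding source by (smt (verit) norm_ge_zero powr_gt_zero)
qed

lemma q0_p0_pos:
  assumes "\<beta> > 0" "\<gamma> > 1" "p > 0" "q > 0" "\<sigma>1 > - (\<beta> * \<gamma>)" "\<sigma>2 > - (\<beta> * \<gamma>)"
    and "p * q > (\<gamma> - 1)^2"
  shows "q0 \<beta> \<gamma> p q \<sigma>1 \<sigma>2 > 0" "p0 \<beta> \<gamma> p q \<sigma>1 \<sigma>2 > 0"
proof -
  have "\<beta> * \<gamma> * (\<gamma> - 1 + q) + (\<gamma> - 1) * \<sigma>1 + \<sigma>2 * q = (\<gamma> - 1) * (\<sigma>1 + \<beta> * \<gamma>) + q * (\<sigma>2 + \<beta> * \<gamma>)"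
    "\<beta> * \<gamma> * (\<gamma> - 1 + p) + (\<gamma> - 1) * \<sigma>2 + \<sigma>1 * p = (\<gamma> - 1) * (\<sigma>2 + \<beta> * \<gamma>) + p * (\<sigma>1 + \<beta> * \<gamma>)"
    by (simp_all add: algebra_simps)
  then show "q0 \<beta> \<gamma> p q \<sigma>1 \<sigma>2 > 0" "p0 \<beta> \<gamma> p q \<sigma>1 \<sigma>2 > 0"
    unfolding q0_def p0_def using assms by (auto intro!: divide_pos_pos add_pos_pos)
qed

lemma q0_p0_equations:
  assumes "p * q > (\<gamma> - 1)^2"
  shows "p0 \<beta> \<gamma> p q \<sigma>1 \<sigma>2 * q = \<beta> * \<gamma> + q0 \<beta> \<gamma> p q \<sigma>1 \<sigma>2 * (\<gamma> - 1) + \<sigma>1"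
    and "q0 \<beta> \<gamma> p q \<sigma>1 \<sigma>2 * p = \<beta> * \<gamma> + p0 \<beta> \<gamma> p q \<sigma>1 \<sigma>2 * (\<gamma> - 1) + \<sigma>2"
  using assms by (simp_all add: p0_def q0_def field_simps power2_eq_square)

theorem theorem3:
  fixes \<beta> \<gamma> p q \<sigma>1 \<sigma>2 :: real
  assumes "CARD('n::finite) \<ge> 3"
    and "\<beta> > 0" and "1 < \<gamma>" and "\<gamma> \<le> 2" and "\<beta> * \<gamma> < real CARD('n)"
    and "p > 0" and "q > 0"
    and "\<sigma>1 > - (\<beta> * \<gamma>)" and "\<sigma>2 > - (\<beta> * \<gamma>)"
    and "p * q > (\<gamma> - 1)^2"
    and "max (q0 \<beta> \<gamma> p q \<sigma>1 \<sigma>2) (p0 \<beta> \<gamma> p q \<sigma>1 \<sigma>2)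
           < (real CARD('n) - \<beta> * \<gamma>) / (\<gamma> - 1)"
  shows "\<exists>(c1 :: real^'n \<Rightarrow> real) c2. double_bounded c1 \<and> double_bounded c2 \<and>
           (\<exists>u v. positive_solution \<beta> \<gamma> p q \<sigma>1 \<sigma>2 c1 c2 u v)"
proof -
  let ?Q = "q0 \<beta> \<gamma> p q \<sigma>1 \<sigma>2" and ?P = "p0 \<beta> \<gamma> p q \<sigma>1 \<sigma>2"
  have pos: "?Q > 0" "?P > 0"
    using q0_p0_pos assms by auto
  have bound: "\<beta> * \<gamma> + ?Q * (\<gamma> - 1) < real CARD('n)" "\<beta> * \<gamma> + ?P * (\<gamma> - 1) < real CARD('n)"
    using assms(3,11) by (simp_all add: pos_less_divide_eq)
  obtain c1 :: "real^'n \<Rightarrow> real" where "double_bounded c1"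
    and "\<And>x. ennreal ((1 + norm x) powr (- ?Q))
               = ennreal (c1 x) * wolff \<beta> \<gamma> (\<lambda>y. norm y powr \<sigma>1 * ((1 + norm y) powr (- ?P)) powr q) x"
    using wolff_equation_power_decay[OF assms(2,3,8) pos(1) bound(1) q0_p0_equations(1)[OF assms(10)]] by blast
  moreover obtain c2 :: "real^'n \<Rightarrow> real" where "double_bounded c2"
    and "\<And>x. ennreal ((1 + norm x) powr (- ?P))
               = ennreal (c2 x) * wolff \<beta> \<gamma> (\<lambda>y. norm y powr \<sigma>2 * ((1 + norm y) powr (- ?Q)) powr p) x"
    using wolff_equation_power_decay[OF assms(2,3,9) pos(2) bound(2) q0_p0_equations(2)[OF assms(10)]] by blast
  moreover have "(1 + norm x) powr a > 0" for a and x :: "real^'n"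
    by (smt (verit) norm_ge_zero powr_gt_zero)
  ultimately have "positive_solution \<beta> \<gamma> p q \<sigma>1 \<sigma>2 c1 c2
                     (\<lambda>x. (1 + norm x) powr (- ?Q)) (\<lambda>x. (1 + norm x) powr (- ?P))"
    unfolding positive_solution_def by (simp add: L1_loc_one_plus_norm_powr)
  with \<open>double_bounded c1\<close> \<open>double_bounded c2\<close> show ?thesis
    by blast
qed

end
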